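(* Let $1\le p<\infty$ and let $n,m\ge 0$ be integers with $n-m\ge 3$ and $n-m\equiv 1\pmod 2$. Then $$\left[\sum_{i=0}^{\frac{n-m-3}{2}}\binom{n}{i}^p+\binom{n}{\frac{n-m-1}{2}}^p+\frac12\sum_{j=0}^{m}\left(\left[\binom{m}{j}+\binom{n}{\frac{n-m+2j-1}{2}}\right]^p+\left[\binom{m}{j}+\binom{n}{\frac{n-m+2j+1}{2}}\right]^p\right)\right]^{1/p} \le \Big[\sum_{j=0}^{m}\binom{m}{j}^p\Big]^{1/p}+\Big[\sum_{j=0}^{n}\binom{n}{j}^p\Big]^{1/p}.$$
   Context: Binomial coefficients have their usual meaning. *)

theory Defs
  imports Complex_Main
begin

end

theory Submission
  imports Defs "HOL-Analysis.Analysis"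
begin

text \<open>Put \<open>h = (n - m - 1) div 2\<close>, so \<open>n = 2h + 1 + m\<close>. Pad the row \<open>binom m j\<close> with zeros and
place it once at positions \<open>h..h+m\<close> and once at \<open>h+1..h+1+m\<close> of the row \<open>binom n i\<close>. Minkowski's
inequality bounds the p-th power sum of each of the two sums by the p-th power of the right-hand
side. Averaging the two bounds gives the left-hand side, except that one copy of \<open>binom n h ^ p\<close>
is missing from the first bound; it is recovered from the tail \<open>i > h + m\<close>, which contains
\<open>binom n (h + m + 1) = binom n h\<close>.\<close>

lemma convex_powr_nonneg:
  fixes x y t p :: real
  assumes "x \<ge> 0" "y \<ge> 0" "0 \<le> t" "t \<le> 1" "p \<ge> 1"
  shows "((1 - t) * x + t * y) powr p \<le> (1 - t) * x powr p + t * y powr p"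
proof -
  have powr_le_self: "s powr p \<le> s" if "0 \<le> s" "s \<le> 1" for s :: real
    using that assms(5) by (smt (verit) powr_le_one_le powr_nonneg_iff)
  consider "x > 0" "y > 0" | "x = 0" | "y = 0"
    using assms(1,2) by linarith
  then show ?thesis
  proof cases
    case 1
    then show ?thesis
      using convex_onD[OF powr_convex[OF assms(5)], of t x y] assms(3,4) by simp
  next
    case 2
    have "t powr p * y powr p \<le> t * y powr p"
      using powr_le_self[of t] assms(3,4) by (intro mult_right_mono) auto
    with 2 show ?thesis using assms(2,3,4) by (simp add: powr_mult)
  next
    case 3
    have "(1 - t) powr p * x powr p \<le> (1 - t) * x powr p"
      using powr_le_self[of "1 - t"] assms(3,4) by (intro mult_right_mono) auto
    with 3 show ?thesis using assms(1,3,4) by (simp add: powr_mult)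
  qed
qed

lemma Minkowski_sum_powr:
  fixes f g :: "'a \<Rightarrow> real" and p :: real
  assumes "finite S" "\<And>i. i \<in> S \<Longrightarrow> f i \<ge> 0" "\<And>i. i \<in> S \<Longrightarrow> g i \<ge> 0" "p \<ge> 1"
  shows "(\<Sum>i\<in>S. (f i + g i) powr p) \<le>
     ((\<Sum>i\<in>S. f i powr p) powr (1/p) + (\<Sum>i\<in>S. g i powr p) powr (1/p)) powr p"
proof -
  define A where "A = (\<Sum>i\<in>S. f i powr p) powr (1/p)"
  define B where "B = (\<Sum>i\<in>S. g i powr p) powr (1/p)"
  have SA: "A powr p = (\<Sum>i\<in>S. f i powr p)" and SB: "B powr p = (\<Sum>i\<in>S. g i powr p)"
    unfolding A_def B_def using assms by (simp_all add: powr_powr sum_nonneg)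
  have "A \<ge> 0" "B \<ge> 0" unfolding A_def B_def by auto
  have zero_if_norm_zero: "\<forall>i\<in>S. h i = 0"
    if "(\<Sum>i\<in>S. h i powr p) = 0" "\<And>i. i \<in> S \<Longrightarrow> h i \<ge> 0" for h :: "'a \<Rightarrow> real"
    using that sum_nonneg_eq_0_iff[OF assms(1), of "\<lambda>i. h i powr p"] by simp
  consider "A = 0" | "B = 0" | "A > 0" "B > 0"
    using \<open>A \<ge> 0\<close> \<open>B \<ge> 0\<close> by linarith
  then show ?thesis
  proof cases
    case 1
    then have "(\<Sum>i\<in>S. f i powr p) = 0" using SA assms(4) by simp
    then have "\<forall>i\<in>S. f i = 0" using zero_if_norm_zero assms(2) by blast
    then show ?thesis using SB 1 \<open>B \<ge> 0\<close> unfolding A_def[symmetric] B_def[symmetric] by simp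
  next
    case 2
    then have "(\<Sum>i\<in>S. g i powr p) = 0" using SB assms(4) by simp
    then have "\<forall>i\<in>S. g i = 0" using zero_if_norm_zero assms(3) by blast
    then show ?thesis using SA 2 \<open>A \<ge> 0\<close> unfolding A_def[symmetric] B_def[symmetric] by simp
  next
    case 3
    define t where "t = B / (A + B)"
    have t: "0 \<le> t" "t \<le> 1" "1 - t = A / (A + B)"
      using 3 unfolding t_def by (auto simp: field_simps)
    \<comment> \<open>\<open>f + g\<close> is \<open>A + B\<close> times a convex combination of the normalised \<open>f / A\<close> and \<open>g / B\<close>.\<close>
    have pointwise: "(f i + g i) powr p \<le> (A + B) powr p * ((1 - t) * (f i / A) powr p + t * (g i / B) powr p)"
      if "i \<in> S" for i
    proof -
      have f_part: "(1 - t) * (f i / A) = f i / (A + B)"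
        using 3 t(3) by simp
      have g_part: "t * (g i / B) = g i / (A + B)"
        using 3 unfolding t_def by simp
      have "f i + g i = (A + B) * (f i / (A + B) + g i / (A + B))"
        using 3 by (simp flip: add_divide_distrib)
      also have "\<dots> = (A + B) * ((1 - t) * (f i / A) + t * (g i / B))"
        by (simp only: f_part g_part)
      finally have "f i + g i = (A + B) * ((1 - t) * (f i / A) + t * (g i / B))" .
      then have "(f i + g i) powr p = (A + B) powr p * ((1 - t) * (f i / A) + t * (g i / B)) powr p"
        using 3 t assms(2,3)[OF that] by (simp add: powr_mult)
      also have "\<dots> \<le> (A + B) powr p * ((1 - t) * (f i / A) powr p + t * (g i / B) powr p)"
        using convex_powr_nonneg[of "f i / A" "g i / B" t p] 3 t assms(2,3)[OF that] assms(4)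
        by (intro mult_left_mono) auto
      finally show ?thesis .
    qed
    have "(\<Sum>i\<in>S. (f i + g i) powr p)
        \<le> (\<Sum>i\<in>S. (A + B) powr p * ((1 - t) * (f i / A) powr p + t * (g i / B) powr p))"
      using pointwise by (intro sum_mono) auto
    also have "\<dots> = (A + B) powr p * ((1 - t) * ((\<Sum>i\<in>S. f i powr p) / A powr p)
                                     + t * ((\<Sum>i\<in>S. g i powr p) / B powr p))"
      using 3 assms by (simp add: sum_distrib_left sum.distrib powr_divide sum_divide_distrib algebra_simps)
    also have "\<dots> = (A + B) powr p"
      using 3 by (simp flip: SA SB)
    finally show ?thesis unfolding A_def B_def .
  qed
qed

lemma sum_atLeastAtMost_three_blocks:
  fixes F :: "nat \<Rightarrow> 'a::comm_monoid_add"
  assumes "h + m \<le> N"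
  shows "(\<Sum>i=0..N. F i) = (\<Sum>i<h. F i) + (\<Sum>j=0..m. F (h + j)) + (\<Sum>i=h+m+1..N. F i)"
proof -
  have blocks: "{0..N} = {..<h} \<union> {h..h+m} \<union> {h+m+1..N}"
    using assms by auto
  have "(\<Sum>i=0..N. F i) = (\<Sum>i<h. F i) + (\<Sum>i=h..h+m. F i) + (\<Sum>i=h+m+1..N. F i)"
    unfolding blocks by (subst sum.union_disjoint, auto, subst sum.union_disjoint, auto)
  moreover have "(\<Sum>i=h..h+m. F i) = (\<Sum>j=0..m. F (h + j))"
    using sum.shift_bounds_cl_nat_ivl[of F 0 h m] by (simp add: add.commute)
  ultimately show ?thesis by simp
qed

lemma Minkowski_shifted_block:
  fixes a b :: "nat \<Rightarrow> real" and p :: real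
  assumes "\<And>j. a j \<ge> 0" "\<And>i. b i \<ge> 0" "p \<ge> 1" "h + m \<le> N"
  shows "(\<Sum>i<h. b i powr p) + (\<Sum>j=0..m. (a j + b (h + j)) powr p) + (\<Sum>i=h+m+1..N. b i powr p)
     \<le> ((\<Sum>j=0..m. a j powr p) powr (1/p) + (\<Sum>i=0..N. b i powr p) powr (1/p)) powr p"
proof -
  define u where "u i = (if h \<le> i \<and> i \<le> h + m then a (i - h) else 0)" for i
  have "(\<Sum>i=0..N. u i powr p) = (\<Sum>j=0..m. a j powr p)"
    using sum_atLeastAtMost_three_blocks[of h m N "\<lambda>i. u i powr p"] assms(3,4)
    unfolding u_def by simp
  moreover have "(\<Sum>i=0..N. (u i + b i) powr p)
      = (\<Sum>i<h. b i powr p) + (\<Sum>j=0..m. (a j + b (h + j)) powr p) + (\<Sum>i=h+m+1..N. b i powr p)"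
    using sum_atLeastAtMost_three_blocks[of h m N "\<lambda>i. (u i + b i) powr p"] assms(4)
    unfolding u_def by simp
  moreover have "(\<Sum>i=0..N. (u i + b i) powr p)
      \<le> ((\<Sum>i=0..N. u i powr p) powr (1/p) + (\<Sum>i=0..N. b i powr p) powr (1/p)) powr p"
    using assms(1-3) by (intro Minkowski_sum_powr) (auto simp: u_def)
  ultimately show ?thesis by simp
qed

lemma average_Minkowski_shifted_blocks:
  fixes a b :: "nat \<Rightarrow> real" and p :: real
  assumes a: "\<And>j. a j \<ge> 0" and b: "\<And>i. b i \<ge> 0" and p: "p \<ge> 1"
    and N: "N = 2 * h + 1 + m" and symmetric: "b h = b (h + m + 1)"
  shows "(\<Sum>i<h. b i powr p) + b h powr p
       + (1/2) * (\<Sum>j=0..m. (a j + b (h + j)) powr p + (a j + b (h + j + 1)) powr p)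
     \<le> ((\<Sum>j=0..m. a j powr p) powr (1/p) + (\<Sum>i=0..N. b i powr p) powr (1/p)) powr p"
proof -
  have shift_h: "(\<Sum>i<h. b i powr p) + (\<Sum>j=0..m. (a j + b (h + j)) powr p)
      + (\<Sum>i=h+m+1..N. b i powr p)
    \<le> ((\<Sum>j=0..m. a j powr p) powr (1/p) + (\<Sum>i=0..N. b i powr p) powr (1/p)) powr p"
    using Minkowski_shifted_block[of a b p h m N] a b p N by simp
  have shift_Suc_h: "(\<Sum>i<h. b i powr p) + b h powr p + (\<Sum>j=0..m. (a j + b (h + j + 1)) powr p)
      + (\<Sum>i=h+m+2..N. b i powr p)
    \<le> ((\<Sum>j=0..m. a j powr p) powr (1/p) + (\<Sum>i=0..N. b i powr p) powr (1/p)) powr p"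
    using Minkowski_shifted_block[of a b p "h + 1" m N] a b p N by (simp add: add_ac)
  have "b h powr p \<le> (\<Sum>i=h+m+1..N. b i powr p)"
    unfolding symmetric using N by (intro member_le_sum) auto
  moreover have "0 \<le> (\<Sum>i=h+m+2..N. b i powr p)"
    by (intro sum_nonneg) auto
  ultimately show ?thesis
    using shift_h shift_Suc_h unfolding sum.distrib by argo
qed

lemma powr_one_over_le_of_le_powr:
  fixes x R p :: real
  assumes "0 \<le> x" "0 \<le> R" "0 < p" "x \<le> R powr p"
  shows "x powr (1/p) \<le> R"
proof -
  have "x powr (1/p) \<le> (R powr p) powr (1/p)"
    using assms by (intro powr_mono2) auto
  also have "\<dots> = R"
    using assms(2,3) by (simp add: powr_powr)
  finally show ?thesis .
qed

theorem mainTheorem20: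
  fixes p :: real and n m :: nat
  assumes "1 \<le> p" and "n \<ge> m + 3" and "odd (n - m)"
  shows "((\<Sum>i = 0..(n - m - 3) div 2. real (n choose i) powr p)
          + real (n choose ((n - m - 1) div 2)) powr p
          + (1/2) * (\<Sum>j = 0..m.
               (real (m choose j) + real (n choose ((n - m + 2*j - 1) div 2))) powr p
             + (real (m choose j) + real (n choose ((n - m + 2*j + 1) div 2))) powr p))
         powr (1/p)
       \<le> (\<Sum>j = 0..m. real (m choose j) powr p) powr (1/p)
         + (\<Sum>j = 0..n. real (n choose j) powr p) powr (1/p)"
proof -
  define h where "h = (n - m - 1) div 2"
  have n: "n = 2 * h + 1 + m"
    using assms(2,3) unfolding h_def by (auto elim!: oddE)
  have "h \<ge> 1"
    using assms(2) n by simp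
  then have "{0..(n - m - 3) div 2} = {..<h}"
    using n by auto
  moreover have "(n - m + 2 * j - 1) div 2 = h + j" "(n - m + 2 * j + 1) div 2 = h + j + 1" for j
    using n by simp_all
  moreover have "real (n choose h) = real (n choose (h + m + 1))"
    using binomial_symmetric[of h n] n by (simp add: algebra_simps)
  ultimately show ?thesis
    using average_Minkowski_shifted_blocks[of "\<lambda>j. real (m choose j)" "\<lambda>i. real (n choose i)" p n h m]
      assms(1) n
    by (intro powr_one_over_le_of_le_powr) (simp_all add: h_def[symmetric] sum_nonneg add_nonneg_nonneg)
qed

end
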